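(* Let $(\mathcal{S},\mathcal{R})$ be an $r$-complete positive presentation. Then the monoid $\mathrm{Mon}(\mathcal{S};\mathcal{R})$ admits left cancellation (i.e. $xy=xz$ implies $y=z$) if and only if $u^{-1}v\curvearrowright_r\varepsilon$ holds for every relation of $\mathcal{R}$ of the form $su=sv$ with $s\in\mathcal{S}$ and $u,v\in\mathcal{S}^*$. In particular, a sufficient condition for $\mathrm{Mon}(\mathcal{S};\mathcal{R})$ to admit left cancellation is that $\mathcal{R}$ contains no relation $su=sv$ with $s\in\mathcal{S}$ and $u\neq v$.
   Context: A positive presentation is a pair $(\mathcal{S},\mathcal{R})$ where $\mathcal{S}$ is a nonempty set of letters and $\mathcal{R}$ is a family of relations $u=v$, i.e. unordered pairs $\{u,v\}$ of nonempty words in the free monoid $\mathcal{S}^*$. $\varepsilon$ denotes the empty word; $\equiv$ is the smallest congruence on $\mathcal{S}^*$ containing all pairs of $\mathcal{R}$, and $\mathrm{Mon}(\mathcal{S};\mathcal{R})=\mathcal{S}^*/{\equiv}$. Let $\mathcal{S}^{-1}=\{s^{-1}:s\in\mathcal{S}\}$ be a disjoint copy of $\mathcal{S}$; for $u\in\mathcal{S}^*$, $u^{-1}$ is obtained by reversing the order of the letters of $u$ and replacing each $s$ by $s^{-1}$. Right reversing: for words $\mathbf{w},\mathbf{w}'$ on $\mathcal{S}\cup\mathcal{S}^{-1}$ we write $\mathbf{w}\curvearrowright_r\mathbf{w}'$ if $\mathbf{w}'$ is obtained from $\mathbf{w}$ by a finite (possibly empty) sequence of steps, each of which either deletes a subword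 $u^{-1}u$ with $u\in\mathcal{S}^*$ nonempty, or replaces a subword $u^{-1}v$ with $u,v\in\mathcal{S}^*$ nonempty by a word $v'u'^{-1}$ with $u',v'\in\mathcal{S}^*$ such that $uv'=vu'$ is a relation of $\mathcal{R}$. $(\mathcal{S},\mathcal{R})$ is $r$-complete if for all $u,v,u',v'\in\mathcal{S}^*$ with $uv'\equiv vu'$ there exist $u'',v'',w\in\mathcal{S}^*$ with $u^{-1}v\curvearrowright_r v''u''^{-1}$, $u'\equiv u''w$ and $v'\equiv v''w$. *)

theory Defs
  imports Main
begin

(* The alphabet S is the (nonempty) type 'a; words in S^* are 'a lists.
   A family of relations is a set of pairs R; a pair (u,v) in R stands for
   the unordered relation u = v. *)

definition is_rel :: "('a list \<times> 'a list) set \<Rightarrow> 'a list \<Rightarrow> 'a list \<Rightarrow> bool" where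
  "is_rel R u v \<longleftrightarrow> (u, v) \<in> R \<or> (v, u) \<in> R"

definition positive_presentation :: "('a list \<times> 'a list) set \<Rightarrow> bool" where
  "positive_presentation R \<longleftrightarrow> (\<forall>(u, v) \<in> R. u \<noteq> [] \<and> v \<noteq> [])"

inductive req :: "('a list \<times> 'a list) set \<Rightarrow> 'a list \<Rightarrow> 'a list \<Rightarrow> bool" for R where
  req_rel: "(u, v) \<in> R \<Longrightarrow> req R u v"
| req_refl: "req R w w"
| req_sym: "req R u v \<Longrightarrow> req R v u"
| req_trans: "req R u v \<Longrightarrow> req R v w \<Longrightarrow> req R u w"
| req_cong: "req R u v \<Longrightarrow> req R (x @ u @ y) (x @ v @ y)"

definition left_cancellative :: "('a list \<times> 'a list) set \<Rightarrow> bool" where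
  "left_cancellative R \<longleftrightarrow> (\<forall>x y z. req R (x @ y) (x @ z) \<longrightarrow> req R y z)"

(* signed words: (s, True) is s, (s, False) is s^{-1} *)
definition pos :: "'a list \<Rightarrow> ('a \<times> bool) list" where
  "pos u = map (\<lambda>s. (s, True)) u"

definition neg :: "'a list \<Rightarrow> ('a \<times> bool) list" where
  "neg u = rev (map (\<lambda>s. (s, False)) u)"

inductive rev_step :: "('a list \<times> 'a list) set \<Rightarrow> ('a \<times> bool) list \<Rightarrow> ('a \<times> bool) list \<Rightarrow> bool"
  for R where
  rev_del: "u \<noteq> [] \<Longrightarrow> rev_step R (x @ neg u @ pos u @ y) (x @ y)"
| rev_rep: "u \<noteq> [] \<Longrightarrow> v \<noteq> [] \<Longrightarrow> is_rel R (u @ v') (v @ u') \<Longrightarrow>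
            rev_step R (x @ neg u @ pos v @ y) (x @ pos v' @ neg u' @ y)"

definition rreverses :: "('a list \<times> 'a list) set \<Rightarrow> ('a \<times> bool) list \<Rightarrow> ('a \<times> bool) list \<Rightarrow> bool" where
  "rreverses R = (rev_step R)\<^sup>*\<^sup>*"

definition r_complete :: "('a list \<times> 'a list) set \<Rightarrow> bool" where
  "r_complete R \<longleftrightarrow>
     (\<forall>u v u' v'. req R (u @ v') (v @ u') \<longrightarrow>
        (\<exists>u'' v'' w. rreverses R (neg u @ pos v) (pos v'' @ neg u'')
                     \<and> req R u' (u'' @ w) \<and> req R v' (v'' @ w)))"

end

theory Submission
  imports Defs
begin

text \<open>
  Right reversing is sound: interpreting a signed word \<open>w\<close> as the relation ``\<open>x w \<equiv> y\<close>'' on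
  \<open>S\<^sup>*\<close>, with \<open>s\<^sup>-\<^sup>1\<close> acting as right division by \<open>s\<close>, every reversing step preserves that
  relation, so \<open>u\<^sup>-\<^sup>1v \<curvearrowright>\<^sub>r v''u''\<^sup>-\<^sup>1\<close> yields \<open>uv'' \<equiv> vu''\<close>.
  For left cancellation it suffices to cancel one letter \<open>s\<close>. By \<open>r\<close>-completeness an equivalence
  \<open>su \<equiv> sv\<close> is witnessed by a reversal of \<open>s\<^sup>-\<^sup>1s\<close>, which is either deleted or replaced, in one
  final step, by \<open>v''u''\<^sup>-\<^sup>1\<close> for a relation \<open>sv'' = su''\<close>; the hypothesis on such relations
  and soundness give \<open>v'' \<equiv> u''\<close>, hence \<open>u \<equiv> v''w \<equiv> u''w \<equiv> v\<close>.
  Conversely, if the monoid is left cancellative, a relation \<open>su = sv\<close> gives \<open>u \<equiv> v\<close>, and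
  \<open>r\<close>-completeness with \<open>u' = v' = \<epsilon>\<close> forces \<open>u\<^sup>-\<^sup>1v\<close> to reverse to \<open>\<epsilon>\<close>, because in a positive
  presentation only \<open>\<epsilon>\<close> is equivalent to \<open>\<epsilon>\<close>.
\<close>

lemma req_append_right: "req R a b \<Longrightarrow> req R (a @ w) (b @ w)"
  using req_cong[of R a b "[]" w] by simp

lemma req_append_left: "req R a b \<Longrightarrow> req R (w @ a) (w @ b)"
  using req_cong[of R a b w "[]"] by simp

lemma is_rel_imp_req: "is_rel R u v \<Longrightarrow> req R u v"
  unfolding is_rel_def by (auto intro: req_rel req_sym)

lemma req_Nil_iff:
  assumes "positive_presentation R" and "req R a b"
  shows "a = [] \<longleftrightarrow> b = []"
  using assms(2)
proof (induction rule: req.induct)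
  case (req_rel u v)
  then show ?case using assms(1) unfolding positive_presentation_def by auto
qed auto

fun signed_rel :: "('a list \<times> 'a list) set \<Rightarrow> ('a \<times> bool) list \<Rightarrow> 'a list \<Rightarrow> 'a list \<Rightarrow> bool" where
  "signed_rel R [] x y \<longleftrightarrow> req R x y"
| "signed_rel R ((s, b) # w) x y \<longleftrightarrow>
     (if b then signed_rel R w (x @ [s]) y else (\<exists>z. req R x (z @ [s]) \<and> signed_rel R w z y))"

lemma signed_rel_req: "signed_rel R w x y \<Longrightarrow> req R x x' \<Longrightarrow> signed_rel R w x' y"
proof (induction w arbitrary: x x')
  case Nil
  then show ?case by (auto intro: req_trans req_sym)
next
  case (Cons p w)
  show ?case
  proof (cases p)
    case (Pair s b)
    then show ?thesis
      using Cons by (cases b) (auto intro: req_append_right, meson req_sym req_trans)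
  qed
qed

lemma signed_rel_append:
  "signed_rel R (w1 @ w2) x y \<longleftrightarrow> (\<exists>m. signed_rel R w1 x m \<and> signed_rel R w2 m y)"
proof (induction w1 arbitrary: x)
  case Nil
  then show ?case by (auto intro: signed_rel_req req_sym req_refl)
next
  case (Cons p w)
  then show ?case by (cases p) auto
qed

lemma signed_rel_pos: "signed_rel R (pos v) x y \<longleftrightarrow> req R (x @ v) y"
  unfolding pos_def by (induction v arbitrary: x) auto

lemma signed_rel_neg: "signed_rel R (neg u) x y \<longleftrightarrow> req R x (y @ u)"
proof (induction u arbitrary: x rule: rev_induct)
  case Nil
  then show ?case by (simp add: neg_def)
next
  case (snoc s u)
  have "neg (u @ [s]) = (s, False) # neg u" by (simp add: neg_def)
  then have "signed_rel R (neg (u @ [s])) x y \<longleftrightarrow> (\<exists>z. req R x (z @ [s]) \<and> req R z (y @ u))"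
    using snoc by simp
  also have "\<dots> \<longleftrightarrow> req R x (y @ u @ [s])"
    by (metis append.assoc req_append_right req_refl req_trans)
  finally show ?case by simp
qed

lemma signed_rel_neg_pos: "signed_rel R (neg u @ pos v) x y \<longleftrightarrow> (\<exists>m. req R x (m @ u) \<and> req R (m @ v) y)"
  by (simp add: signed_rel_append signed_rel_pos signed_rel_neg)

lemma signed_rel_pos_neg: "signed_rel R (pos v @ neg u) x y \<longleftrightarrow> req R (x @ v) (y @ u)"
  by (auto simp: signed_rel_append signed_rel_pos signed_rel_neg intro: req_trans req_refl)

lemma signed_rel_infix:
  assumes "\<And>x y. signed_rel R w x y \<Longrightarrow> signed_rel R w' x y"
    and "signed_rel R (a @ w @ b) x y"
  shows "signed_rel R (a @ w' @ b) x y"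
  using assms by (meson signed_rel_append)

lemma rev_step_signed_rel: "rev_step R w w' \<Longrightarrow> signed_rel R w x y \<Longrightarrow> signed_rel R w' x y"
proof (induction rule: rev_step.induct)
  case (rev_del u a b)
  have "signed_rel R [] m1 m2" if "signed_rel R (neg u @ pos u) m1 m2" for m1 m2
    using that by (auto simp: signed_rel_neg_pos intro: req_trans)
  with rev_del show ?case using signed_rel_infix[of R "neg u @ pos u" "[]" a b] by simp
next
  case (rev_rep u v v' u' a b)
  have "signed_rel R (pos v' @ neg u') m1 m2" if "signed_rel R (neg u @ pos v) m1 m2" for m1 m2
  proof -
    from that obtain m where "req R m1 (m @ u)" "req R (m @ v) m2"
      by (auto simp: signed_rel_neg_pos)
    then have "req R (m1 @ v') (m @ u @ v')"
      and "req R (m @ u @ v') (m @ v @ u')"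
      and "req R (m @ v @ u') (m2 @ u')"
      using req_append_right req_append_left[OF is_rel_imp_req[OF rev_rep(3)]] by fastforce+
    then show ?thesis by (auto simp: signed_rel_pos_neg intro: req_trans)
  qed
  with rev_rep show ?case using signed_rel_infix[of R "neg u @ pos v" "pos v' @ neg u'" a b] by simp
qed

lemma rreverses_signed_rel: "rreverses R w w' \<Longrightarrow> signed_rel R w x y \<Longrightarrow> signed_rel R w' x y"
  unfolding rreverses_def by (induction rule: rtranclp_induct) (auto intro: rev_step_signed_rel)

lemma rreverses_imp_req:
  assumes "rreverses R (neg u @ pos v) (pos v'' @ neg u'')"
  shows "req R (u @ v'') (v @ u'')"
proof -
  have "signed_rel R (neg u @ pos v) u v"
    by (auto simp: signed_rel_neg_pos intro!: exI[of _ "[]"] req_refl)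
  with assms show ?thesis
    by (auto simp: signed_rel_pos_neg dest: rreverses_signed_rel)
qed

lemma rreverses_Nil_imp_req: "rreverses R (neg u @ pos v) [] \<Longrightarrow> req R u v"
  using rreverses_imp_req[of R u v "[]" "[]"] by (simp add: pos_def neg_def)

lemma rreverses_neg_pos_self: "rreverses R (neg u @ pos u) []"
proof (cases "u = []")
  case True
  then show ?thesis by (simp add: pos_def neg_def rreverses_def)
next
  case False
  then have "rev_step R ([] @ neg u @ pos u @ []) ([] @ [])" by (rule rev_step.rev_del)
  then show ?thesis by (simp add: rreverses_def)
qed

lemma pos_neg_irreducible: "\<not> rev_step R (pos a @ neg b) t"
proof
  assume "rev_step R (pos a @ neg b) t"
  then obtain x u v y where eq: "pos a @ neg b = x @ neg u @ pos v @ y" and "u \<noteq> []" "v \<noteq> []"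
    by (cases rule: rev_step.cases) auto
  then obtain c u0 d v0 where "u = c # u0" "v = d # v0"
    by (meson neq_Nil_conv)
  with eq have "pos a @ neg b = (x @ neg u0) @ [(c, False), (d, True)] @ (pos v0 @ y)"
    by (simp add: pos_def neg_def)
  moreover have "sorted (map (\<lambda>p. \<not> snd p) (pos a @ neg b))"
    by (simp add: pos_def neg_def sorted_append rev_map o_def map_replicate_const)
  ultimately show False by (simp add: sorted_append)
qed

lemma Nil_irreducible: "\<not> rev_step R [] t"
  using pos_neg_irreducible[of R "[]" "[]"] by (simp add: pos_def neg_def)

lemma pos_neg_inject: "pos a @ neg b = pos c @ neg d \<Longrightarrow> a = c \<and> b = d"
proof -
  have split: "takeWhile snd (pos a @ neg b) = pos a" "dropWhile snd (pos a @ neg b) = neg b" for a b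
    by (cases b rule: rev_cases; simp add: pos_def neg_def takeWhile_append dropWhile_append)+
  have inj: "inj pos" "inj neg"
    by (auto simp: inj_def pos_def neg_def)
  assume "pos a @ neg b = pos c @ neg d"
  then show ?thesis using split[of a b] split[of c d] inj by (metis injD)
qed

lemma rev_step_neg_pos_letter:
  assumes "rev_step R (neg [s] @ pos [s]) t"
  shows "t = [] \<or> (\<exists>a b. t = pos a @ neg b \<and> is_rel R (s # a) (s # b))"
proof -
  have letters: "x = [] \<and> y = [] \<and> u = [s] \<and> v = [s]"
    if "x @ neg u @ pos v @ y = neg [s] @ pos [s]" "u \<noteq> []" "v \<noteq> []" for x u v y
  proof -
    have "length x + length u + length v + length y = 2"
      using arg_cong[OF that(1), of length] by (simp add: pos_def neg_def)
    with that(2,3) have "length x = 0" "length y = 0" "length u = 1" "length v = 1"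
      by (auto simp: neq_Nil_conv)
    with that(1) show ?thesis
      by (auto simp: pos_def neg_def length_Suc_conv)
  qed
  from assms show ?thesis
  proof (cases rule: rev_step.cases)
    case (rev_del u x y)
    then show ?thesis using letters[of x u u y] by simp
  next
    case (rev_rep u v v' u' x y)
    then show ?thesis using letters[of x u v y] by auto
  qed
qed

lemma rreverses_neg_pos_letter:
  assumes "rreverses R (neg [s] @ pos [s]) t"
  shows "t = neg [s] @ pos [s] \<or> t = [] \<or> (\<exists>a b. t = pos a @ neg b \<and> is_rel R (s # a) (s # b))"
  using assms unfolding rreverses_def
proof (induction rule: rtranclp_induct)
  case (step y z)
  then show ?case using rev_step_neg_pos_letter Nil_irreducible pos_neg_irreducible by metis
qed simp

lemma req_cancel_letter:
  assumes "r_complete R"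
    and reverses: "\<forall>s u v. is_rel R (s # u) (s # v) \<longrightarrow> rreverses R (neg u @ pos v) []"
    and "req R (s # u) (s # v)"
  shows "req R u v"
proof -
  from assms(1,3) obtain u'' v'' w where
    rev: "rreverses R (neg [s] @ pos [s]) (pos v'' @ neg u'')"
    and "req R v (u'' @ w)" "req R u (v'' @ w)"
    unfolding r_complete_def by (metis append_Cons append_Nil)
  have "req R v'' u''"
  proof -
    have "pos v'' @ neg u'' \<noteq> neg [s] @ pos [s]"
      using pos_neg_irreducible[of R v'' u''] rev_step.rev_del[of "[s]" R "[]" "[]"] by auto
    with rreverses_neg_pos_letter[OF rev]
    consider "pos v'' @ neg u'' = []" | "is_rel R (s # v'') (s # u'')"
      by (metis pos_neg_inject)
    then show ?thesis
      by cases (auto simp: pos_def neg_def intro: req_refl rreverses_Nil_imp_req reverses[rule_format])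
  qed
  with \<open>req R v (u'' @ w)\<close> \<open>req R u (v'' @ w)\<close> show ?thesis
    by (meson req_append_right req_sym req_trans)
qed

lemma left_cancellative_if_rreverses:
  assumes "r_complete R"
    and "\<forall>s u v. is_rel R (s # u) (s # v) \<longrightarrow> rreverses R (neg u @ pos v) []"
  shows "left_cancellative R"
  unfolding left_cancellative_def
proof (intro allI impI)
  fix x y z
  show "req R (x @ y) (x @ z) \<Longrightarrow> req R y z"
    by (induction x) (auto intro: req_cancel_letter[OF assms])
qed

lemma rreverses_if_left_cancellative:
  assumes "positive_presentation R" "r_complete R" "left_cancellative R"
    and "is_rel R (s # u) (s # v)"
  shows "rreverses R (neg u @ pos v) []"
proof -
  have "req R ([s] @ u) ([s] @ v)" using is_rel_imp_req[OF assms(4)] by simp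
  with assms(3) have "req R u v" unfolding left_cancellative_def by blast
  then have "req R (u @ []) (v @ [])" by simp
  with assms(2) obtain u'' v'' w where
    rev: "rreverses R (neg u @ pos v) (pos v'' @ neg u'')"
    and "req R [] (u'' @ w)" "req R [] (v'' @ w)"
    unfolding r_complete_def by blast
  then have "u'' = []" "v'' = []" using req_Nil_iff[OF assms(1)] by auto
  with rev show ?thesis by (simp add: pos_def neg_def)
qed

theorem proposition6p1:
  fixes R :: "('a list \<times> 'a list) set"
  assumes "positive_presentation R"
    and "r_complete R"
  shows "(left_cancellative R \<longleftrightarrow>
            (\<forall>s u v. is_rel R (s # u) (s # v) \<longrightarrow> rreverses R (neg u @ pos v) []))
       \<and> ((\<forall>s u v. is_rel R (s # u) (s # v) \<longrightarrow> u = v) \<longrightarrow> left_cancellative R)"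
proof -
  have "left_cancellative R \<longleftrightarrow>
      (\<forall>s u v. is_rel R (s # u) (s # v) \<longrightarrow> rreverses R (neg u @ pos v) [])"
    using rreverses_if_left_cancellative[OF assms] left_cancellative_if_rreverses[OF assms(2)]
    by blast
  moreover have "(\<forall>s u v. is_rel R (s # u) (s # v) \<longrightarrow> u = v) \<Longrightarrow>
      (\<forall>s u v. is_rel R (s # u) (s # v) \<longrightarrow> rreverses R (neg u @ pos v) [])"
    using rreverses_neg_pos_self by blast
  ultimately show ?thesis by blast
qed

end
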